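(* Let $\ell,m,n$ be positive integers with $\ell<n$, $m<n$, $\gcd(m,n)=1$, and let $d\in\{1,\dots,n-1\}$ be the multiplicative inverse of $m$ modulo $n$. If $\ell\ne1$ then $$\mathcal{F}[\ell,m,n]^{\overline{(\ell-1)d}}=\mathcal{F}[\ell-1,m,n],\qquad \mathcal{F}[\ell,m,n]^{\overline{0}}=\mathcal{F}[\ell-1,m,n]^{(-d)},$$ and if $\ell\ne n-1$ then $$\mathcal{F}[\ell,m,n]^{\overline{\ell d}}=\mathcal{F}[\ell+1,m,n],\qquad \mathcal{F}[\ell,m,n]^{\overline{-d}}=\mathcal{F}[\ell+1,m,n]^{(d)}.$$
   Context: For positive integers $\ell<n$, $m<n$ with $\gcd(m,n)=1$, $\mathcal{F}[\ell,m,n]:\mathbb{Z}\to\{L,R\}$ is defined by $\mathcal{F}[\ell,m,n]_i=L$ if $im\bmod n<\ell$ and $R$ if $im \bmod n\ge\ell$; it is periodic with period $n$. For a sequence $\mathcal{S}$ of period $n$ and $j\in\mathbb{Z}$: $\mathcal{S}^{(j)}$ is the $j$-th left shift, $\mathcal{S}^{(j)}_i=\mathcal{S}_{i+j}$; $\mathcal{S}^{\overline j}$ is the sequence that differs from $\mathcal{S}$ exactly at the indices $j+kn$, $k\in\mathbb{Z}$ (the symbol $L$ is swapped with $R$ there). Indices such as $-d$ and $(\ell-1)d$ are taken modulo $n$. *)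

theory Defs
  imports Main
begin

datatype LR = L | R

fun swapLR :: "LR \<Rightarrow> LR" where
  "swapLR L = R" | "swapLR R = L"

definition Fseq :: "int \<Rightarrow> int \<Rightarrow> int \<Rightarrow> int \<Rightarrow> LR" where
  "Fseq l m n i = (if (i * m) mod n < l then L else R)"

definition lshift :: "(int \<Rightarrow> LR) \<Rightarrow> int \<Rightarrow> int \<Rightarrow> LR" where
  "lshift S j = (\<lambda>i. S (i + j))"

text \<open>S^{bar j} for a sequence of period n: swap L/R exactly at indices j + k n.\<close>
definition flipAt :: "int \<Rightarrow> (int \<Rightarrow> LR) \<Rightarrow> int \<Rightarrow> int \<Rightarrow> LR" where
  "flipAt n S j = (\<lambda>i. if i mod n = j mod n then swapLR (S i) else S i)"

end

theory Submission
  imports Defs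
begin

text \<open>Write \<open>r i = (i * m) mod n\<close>, so that \<open>\<F>[l,m,n]\<^sub>i = L\<close> iff \<open>r i < l\<close>. Since \<open>d\<close> inverts \<open>m\<close>,
  \<open>i \<mapsto> r i\<close> is injective modulo \<open>n\<close>, \<open>r (l d) = l\<close> and \<open>r (i + d) = (r i + 1) mod n\<close>.
  Raising the threshold from \<open>l\<close> to \<open>l + 1\<close> changes the sequence exactly at the indices with
  \<open>r i = l\<close>, i.e. at the class of \<open>l d\<close>; a shift by \<open>d\<close> raises every residue by one, except that
  \<open>n - 1\<close> wraps around to \<open>0\<close>, which accounts for the single flip at \<open>-d\<close> (resp. \<open>0\<close>).\<close>

lemma mult_mod_inverse_cancel:
  fixes m d n k :: int
  assumes "(m * d) mod n = 1 mod n"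
  shows "(k * d * m) mod n = k mod n"
  by (metis assms mod_mult_right_eq mult.assoc mult.commute mult.right_neutral)

lemma mod_eq_iff_mult_mod_eq:
  fixes m d n i j :: int
  assumes "(m * d) mod n = 1 mod n"
  shows "i mod n = j mod n \<longleftrightarrow> (i * m) mod n = (j * m) mod n"
proof
  assume "(i * m) mod n = (j * m) mod n"
  then have "(i * m * d) mod n = (j * m * d) mod n"
    by (metis mod_mult_left_eq)
  then show "i mod n = j mod n"
    using mult_mod_inverse_cancel[OF assms] by (metis mult.commute mult.left_commute)
qed (metis mod_mult_left_eq)

lemma add_inverse_mult_mod:
  fixes m d n i :: int
  assumes "(m * d) mod n = 1 mod n"
  shows "((i + d) * m) mod n = ((i * m) mod n + 1) mod n"
  by (metis assms distrib_right mod_add_eq mod_mod_trivial mult.commute)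

lemma
  fixes l m n d :: int
  assumes "0 \<le> l" "l < n" "(m * d) mod n = 1 mod n"
  shows flipAt_Fseq_mult_inverse: "flipAt n (Fseq l m n) (l * d) = Fseq (l + 1) m n"
    and flipAt_Fseq_succ_mult_inverse: "flipAt n (Fseq (l + 1) m n) (l * d) = Fseq l m n"
proof -
  have "(l * d * m) mod n = l"
    using mult_mod_inverse_cancel[OF assms(3), of l] assms(1,2) by simp
  then have "i mod n = (l * d) mod n \<longleftrightarrow> (i * m) mod n = l" for i
    using mod_eq_iff_mult_mod_eq[OF assms(3), of i "l * d"] by simp
  then show "flipAt n (Fseq l m n) (l * d) = Fseq (l + 1) m n"
    and "flipAt n (Fseq (l + 1) m n) (l * d) = Fseq l m n"
    by (auto simp: flipAt_def Fseq_def)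
qed

lemma add_inverse_mult_mod_cases:
  fixes m d n i :: int
  assumes "0 < n" "(m * d) mod n = 1 mod n"
  shows "((i + d) * m) mod n = (if (i * m) mod n = n - 1 then 0 else (i * m) mod n + 1)"
proof -
  have "0 \<le> (i * m) mod n" "(i * m) mod n < n"
    using assms(1) by simp_all
  then show ?thesis
    using add_inverse_mult_mod[OF assms(2), of i] by (auto intro: mod_pos_pos_trivial)
qed

lemma flipAt_Fseq_minus_inverse:
  fixes l m n d :: int
  assumes "0 \<le> l" "l < n" "(m * d) mod n = 1 mod n"
  shows "flipAt n (Fseq l m n) (- d) = lshift (Fseq (l + 1) m n) d"
proof
  fix i
  have "0 < n" using assms by simp
  have "((- d + d) * m) mod n = 0"
    by simp
  then have "((- d) * m) mod n = n - 1"
    using add_inverse_mult_mod_cases[OF \<open>0 < n\<close> assms(3), of "- d"] \<open>0 < n\<close>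
    by (smt (verit) pos_mod_sign)
  then have "i mod n = (- d) mod n \<longleftrightarrow> (i * m) mod n = n - 1"
    using mod_eq_iff_mult_mod_eq[OF assms(3), of i "- d"] by simp
  then show "flipAt n (Fseq l m n) (- d) i = lshift (Fseq (l + 1) m n) d i"
    using add_inverse_mult_mod_cases[OF \<open>0 < n\<close> assms(3), of i] assms
    by (auto simp: flipAt_def lshift_def Fseq_def)
qed

lemma flipAt_Fseq_succ_zero:
  fixes l m n d :: int
  assumes "0 \<le> l" "l < n" "(m * d) mod n = 1 mod n"
  shows "flipAt n (Fseq (l + 1) m n) 0 = lshift (Fseq l m n) (- d)"
proof
  fix i
  have "0 < n" using assms by simp
  have "i mod n = 0 \<longleftrightarrow> (i * m) mod n = 0"
    using mod_eq_iff_mult_mod_eq[OF assms(3), of i 0] by simp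
  then show "flipAt n (Fseq (l + 1) m n) 0 i = lshift (Fseq l m n) (- d) i"
    using add_inverse_mult_mod_cases[OF \<open>0 < n\<close> assms(3), of "i - d"] assms
      pos_mod_sign[OF \<open>0 < n\<close>, of "(i - d) * m"]
    by (auto simp: flipAt_def lshift_def Fseq_def split: if_splits; linarith)
qed

theorem proposition3p1:
  fixes l m n d :: int
  assumes "0 < l" "l < n" "0 < m" "m < n" "gcd m n = 1"
    and "1 \<le> d" "d \<le> n - 1" "(m * d) mod n = 1 mod n"
  shows "(l \<noteq> 1 \<longrightarrow>
            flipAt n (Fseq l m n) ((l - 1) * d) = Fseq (l - 1) m n \<and>
            flipAt n (Fseq l m n) 0 = lshift (Fseq (l - 1) m n) (- d)) \<and>
         (l \<noteq> n - 1 \<longrightarrow>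
            flipAt n (Fseq l m n) (l * d) = Fseq (l + 1) m n \<and>
            flipAt n (Fseq l m n) (- d) = lshift (Fseq (l + 1) m n) d)"
proof -
  have "0 \<le> l - 1" "l - 1 < n"
    using assms(1,2) by simp_all
  then have "flipAt n (Fseq l m n) ((l - 1) * d) = Fseq (l - 1) m n"
    and "flipAt n (Fseq l m n) 0 = lshift (Fseq (l - 1) m n) (- d)"
    using flipAt_Fseq_succ_mult_inverse[of "l - 1" n m d] flipAt_Fseq_succ_zero[of "l - 1" n m d]
      assms(8)
    by simp_all
  moreover have "flipAt n (Fseq l m n) (l * d) = Fseq (l + 1) m n"
    and "flipAt n (Fseq l m n) (- d) = lshift (Fseq (l + 1) m n) d"
    using flipAt_Fseq_mult_inverse flipAt_Fseq_minus_inverse assms(1,2,8) by simp_all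
  ultimately show ?thesis
    by simp
qed

end
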